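(* Let $q\ge 2$, $F,P,m>0$, and consider positive reals $f_1,\dots,f_q,p_1,\dots,p_q$ subject to $\sum_i f_i=F$, $\sum_i p_i=P$, $f_1p_1\ge f_2p_2\ge\dots\ge f_qp_q$, and $f_1p_1\le m$. Then the supremum of $\sum_{i=1}^q f_ip_i$ under these constraints equals $f_{\max}(F,P,m)=FP$ if $FP\le m$; $\;um+(\sqrt{FP}-u\sqrt m)^2$ if $\frac{FP}{(u+1)^2}\le m<\frac{FP}{u^2}$ for some $u\in\{1,\dots,q-1\}$; $\;mq$ if $m<\frac{FP}{q^2}$. *)

theory Defs
  imports Complex_Main
begin

text \<open>Feasible values of the objective: sums over indices 0..q-1 (paper's 1..q).\<close>
definition feasible_sums :: "nat \<Rightarrow> real \<Rightarrow> real \<Rightarrow> real \<Rightarrow> real set" where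
  "feasible_sums q F P m =
     {(\<Sum>i<q. f i * p i) | f p.
        (\<forall>i<q. f i > 0 \<and> p i > 0) \<and>
        (\<Sum>i<q. f i) = F \<and> (\<Sum>i<q. p i) = P \<and>
        (\<forall>i. Suc i < q \<longrightarrow> f (Suc i) * p (Suc i) \<le> f i * p i) \<and>
        f 0 * p 0 \<le> m}"

end

theory Submission
  imports Defs "HOL-Analysis.Convex"
begin

text \<open>Substituting \<open>s i = \<surd>(f i * p i)\<close>, the constraints become: \<open>s\<close> is a descending
  positive sequence bounded by \<open>\<surd>m\<close> with \<open>\<Sum>i<q. s i \<le> \<surd>(F P)\<close>. Necessity of the sum bound is
  Cauchy--Schwarz; conversely, for \<open>q \<ge> 2\<close> every such \<open>s\<close> is realised by positive factors
  with the prescribed sums. The objective \<open>\<Sum>i<q. (s i)\<^sup>2\<close> is convex, so on this box-with-budget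
  it is maximised at a vertex: as many entries \<open>\<surd>m\<close> as the budget \<open>\<surd>(F P)\<close> allows and the
  remainder in one further entry.\<close>

lemma sum_sqrt_mult_le:
  fixes f p :: "'a \<Rightarrow> real"
  assumes "\<forall>i\<in>I. 0 \<le> f i \<and> 0 \<le> p i"
  shows "(\<Sum>i\<in>I. sqrt (f i * p i)) \<le> sqrt ((\<Sum>i\<in>I. f i) * (\<Sum>i\<in>I. p i))"
proof (rule real_le_rsqrt)
  have "(\<Sum>i\<in>I. sqrt (f i * p i))\<^sup>2 = (\<Sum>i\<in>I. sqrt (f i) * sqrt (p i))\<^sup>2"
    by (simp add: real_sqrt_mult)
  also have "\<dots> \<le> (\<Sum>i\<in>I. (sqrt (f i))\<^sup>2) * (\<Sum>i\<in>I. (sqrt (p i))\<^sup>2)"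
    by (rule Cauchy_Schwarz_ineq_sum)
  also have "\<dots> = (\<Sum>i\<in>I. f i) * (\<Sum>i\<in>I. p i)"
    using assms by (intro arg_cong2[where f = "(*)"] sum.cong) auto
  finally show "(\<Sum>i\<in>I. sqrt (f i * p i))\<^sup>2 \<le> (\<Sum>i\<in>I. f i) * (\<Sum>i\<in>I. p i)" .
qed

lemma cSup_eq_of_tendsto:
  fixes X :: "'a :: {conditionally_complete_linorder, linorder_topology} set"
  assumes ub: "\<And>x. x \<in> X \<Longrightarrow> x \<le> V" and F: "F \<noteq> bot"
    and mem: "eventually (\<lambda>d. g d \<in> X) F" and lim: "(g \<longlongrightarrow> V) F"
  shows "Sup X = V"
proof (rule antisym)
  obtain d where "g d \<in> X" using eventually_happens'[OF F mem] by blast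
  then show "Sup X \<le> V" using ub by (intro cSup_least) auto
  have "eventually (\<lambda>d. g d \<le> Sup X) F"
    using mem by eventually_elim (meson bdd_aboveI cSup_upper ub)
  then show "V \<le> Sup X" using lim F by (intro tendsto_upperbound) auto
qed

lemma descending_le_first:
  fixes g :: "nat \<Rightarrow> 'a :: order"
  assumes "\<forall>i. Suc i < q \<longrightarrow> g (Suc i) \<le> g i" and "i < q"
  shows "g i \<le> g 0"
  using assms(2)
proof (induction i)
  case (Suc i)
  then show ?case using assms(1) order_trans by (metis Suc_lessD)
qed simp

text \<open>Entries \<open>s i \<ge> t\<close> lie under the chord of \<open>x\<^sup>2\<close> over \<open>[t, M]\<close>, smaller ones
  under the line \<open>t x\<close>; summing these linear bounds, the square sum is largest when
  \<open>u\<close> entries equal \<open>M\<close> and one equals the remainder \<open>t\<close>.\<close>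
lemma sum_squares_le_of_bounded_sum:
  fixes s :: "'a \<Rightarrow> real"
  assumes fin: "finite I" and bnd: "\<forall>i\<in>I. 0 \<le> s i \<and> s i \<le> M"
    and sum_le: "sum s I \<le> real u * M + t" and t: "0 \<le> t" "t \<le> M"
  shows "(\<Sum>i\<in>I. (s i)\<^sup>2) \<le> real u * M\<^sup>2 + t\<^sup>2"
proof -
  define A where "A = {i\<in>I. t \<le> s i}"
  define k where "k = card A"
  define T where "T = sum s A"
  have AI: "A \<subseteq> I" by (auto simp: A_def)
  have split_sq: "(\<Sum>i\<in>I. (s i)\<^sup>2) = (\<Sum>i\<in>A. (s i)\<^sup>2) + (\<Sum>i\<in>I-A. (s i)\<^sup>2)"
    and split: "sum s I = T + sum s (I - A)"
    using fin AI unfolding T_def by (metis sum.subset_diff add.commute)+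
  have "(\<Sum>i\<in>A. (s i)\<^sup>2) \<le> (\<Sum>i\<in>A. (M + t) * s i - M * t)"
  proof (rule sum_mono)
    fix i assume "i \<in> A"
    then have "(s i - M) * (s i - t) \<le> 0" using bnd by (auto simp: A_def mult_nonpos_nonneg)
    then show "(s i)\<^sup>2 \<le> (M + t) * s i - M * t" by (simp add: power2_eq_square algebra_simps)
  qed
  also have "\<dots> = (M + t) * T - real k * M * t"
    by (simp add: sum_subtractf sum_distrib_left T_def k_def)
  finally have high: "(\<Sum>i\<in>A. (s i)\<^sup>2) \<le> (M + t) * T - real k * M * t" .
  have "(\<Sum>i\<in>I-A. (s i)\<^sup>2) \<le> (\<Sum>i\<in>I-A. t * s i)"
    using bnd by (intro sum_mono) (auto simp: A_def power2_eq_square mult_right_mono)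
  then have low: "(\<Sum>i\<in>I-A. (s i)\<^sup>2) \<le> t * sum s (I - A)"
    by (simp add: sum_distrib_left)
  have total: "(\<Sum>i\<in>I. (s i)\<^sup>2) \<le> t * (real u * M + t) + M * (T - real k * t)"
    using split_sq high low split sum_le t mult_left_mono[OF sum_le, of t]
    by (simp add: algebra_simps)
  have M: "0 \<le> M" using t by simp
  have T_le: "T \<le> real k * M" unfolding T_def k_def
    using sum_bounded_above[of A s M] bnd AI by auto
  have "0 \<le> sum s (I - A)" using bnd by (intro sum_nonneg) auto
  then have T_le_sum: "T \<le> real u * M + t" using split sum_le by linarith
  have "M * (T - real k * t) \<le> M * (real u * (M - t))"
  proof (cases "k \<le> u")
    case True
    then have "T - real k * t \<le> real u * (M - t)"
      using T_le t mult_right_mono[of "real k" "real u" "M - t"] by (simp add: algebra_simps)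
    then show ?thesis using M by (rule mult_left_mono)
  next
    case False
    then have "(real u + 1) * t \<le> real k * t" using t by (intro mult_right_mono) auto
    then show ?thesis using T_le_sum M by (intro mult_left_mono) (auto simp: algebra_simps)
  qed
  then show ?thesis using total by (simp add: power2_eq_square algebra_simps)
qed

text \<open>Only the first factor is free: the others are chosen proportional to \<open>s i\<close>, which
  makes \<open>\<Sum>i<q. p i\<close> the function \<open>a\<^sup>2/x + R\<^sup>2/(F - x)\<close> of \<open>x = f 0\<close>; it tends to
  \<open>\<infinity>\<close> as \<open>x \<rightarrow> 0\<close> and attains its minimum \<open>(\<Sum>i<q. s i)\<^sup>2/F \<le> P\<close>, so it takes the
  value \<open>P\<close> by the intermediate value theorem.\<close>
lemma exists_factors_with_products:
  fixes s :: "nat \<Rightarrow> real"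
  assumes q: "2 \<le> q" and F: "0 < F" and P: "0 < P" and s: "\<forall>i<q. 0 < s i"
    and sum_sq: "(\<Sum>i<q. s i)\<^sup>2 \<le> F * P"
  obtains f p where "\<forall>i<q. 0 < f i \<and> 0 < p i" "\<forall>i<q. f i * p i = (s i)\<^sup>2"
    "(\<Sum>i<q. f i) = F" "(\<Sum>i<q. p i) = P"
proof -
  obtain r where r: "q = Suc r" "0 < r" using q by (cases q) auto
  define a where "a = s 0"
  define R where "R = (\<Sum>i<r. s (Suc i))"
  have a: "0 < a" using s r by (simp add: a_def)
  have R: "0 < R" unfolding R_def using s r by (intro sum_pos) auto
  have shift: "(\<Sum>i<q. h i) = h 0 + (\<Sum>i<r. h (Suc i))" for h :: "nat \<Rightarrow> real"
    unfolding r by (rule sum.lessThan_Suc_shift)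
  have sum_s: "(\<Sum>i<q. s i) = a + R" by (simp add: shift a_def R_def)
  define g where "g x = a\<^sup>2 / x + R\<^sup>2 / (F - x)" for x
  define x1 where "x1 = F * a / (a + R)"
  define x0 where "x0 = min x1 (a\<^sup>2 / P)"
  have x1: "0 < x1" "x1 < F" using a R F by (auto simp: x1_def field_simps)
  have x0: "0 < x0" "x0 \<le> x1" using x1 a P by (auto simp: x0_def)
  have "g x1 = (a + R)\<^sup>2 / F"
    using a R F by (simp add: g_def x1_def field_simps power2_eq_square)
  then have "g x1 \<le> P" using sum_sq F by (simp add: sum_s divide_le_eq mult.commute)
  moreover have "P \<le> g x0"
  proof -
    have "x0 \<le> a\<^sup>2 / P" by (simp add: x0_def)
    then have "P \<le> a\<^sup>2 / x0" using x0 P by (simp add: le_divide_eq field_simps)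
    moreover have "0 < R\<^sup>2 / (F - x0)" using x0 x1 R by simp
    ultimately show ?thesis by (simp add: g_def)
  qed
  moreover have "\<forall>x. x0 \<le> x \<and> x \<le> x1 \<longrightarrow> isCont g x"
    using x0 x1 unfolding g_def by (intro allI impI continuous_intros) auto
  ultimately obtain x where x: "x0 \<le> x" "x \<le> x1" "g x = P"
    using IVT2[of g x1 P x0] x0 by blast
  define f where "f i = (if i = 0 then x else (F - x) * s i / R)" for i
  define p where "p i = (s i)\<^sup>2 / f i" for i
  have f: "\<forall>i<q. 0 < f i" using x x0 x1 s R by (simp add: f_def)
  show thesis
  proof
    show "\<forall>i<q. 0 < f i \<and> 0 < p i" using f s by (auto simp: p_def)
    show "\<forall>i<q. f i * p i = (s i)\<^sup>2" using f by (auto simp: p_def)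
    show "(\<Sum>i<q. f i) = F"
      using R by (simp add: shift f_def flip: sum_divide_distrib sum_distrib_left R_def)
    have "p (Suc i) = s (Suc i) * R / (F - x)" if "i < r" for i
      using s that r R by (simp add: p_def f_def power2_eq_square)
    then have "(\<Sum>i<q. p i) = a\<^sup>2 / x + (\<Sum>i<r. s (Suc i)) * R / (F - x)"
      by (simp add: shift p_def f_def a_def sum_divide_distrib sum_distrib_right)
    also have "\<dots> = g x" by (simp add: g_def R_def power2_eq_square)
    finally show "(\<Sum>i<q. p i) = P" using x by simp
  qed
qed

lemma feasible_sums_as_sum_squares:
  assumes "x \<in> feasible_sums q F P m"
  obtains s where "\<forall>i<q. 0 \<le> s i \<and> s i \<le> sqrt m" "(\<Sum>i<q. s i) \<le> sqrt (F * P)"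
    "x = (\<Sum>i<q. (s i)\<^sup>2)"
proof -
  obtain f p where pos: "\<forall>i<q. 0 < f i \<and> 0 < p i" and F: "(\<Sum>i<q. f i) = F"
    and P: "(\<Sum>i<q. p i) = P" and desc: "\<forall>i. Suc i < q \<longrightarrow> f (Suc i) * p (Suc i) \<le> f i * p i"
    and first: "f 0 * p 0 \<le> m" and x: "x = (\<Sum>i<q. f i * p i)"
    using assms unfolding feasible_sums_def by blast
  show thesis
  proof
    show "\<forall>i<q. 0 \<le> sqrt (f i * p i) \<and> sqrt (f i * p i) \<le> sqrt m"
      using descending_le_first[OF desc] first pos by (auto intro: order_trans)
    show "(\<Sum>i<q. sqrt (f i * p i)) \<le> sqrt (F * P)"
      unfolding F[symmetric] P[symmetric] using pos by (intro sum_sqrt_mult_le) auto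
    show "x = (\<Sum>i<q. (sqrt (f i * p i))\<^sup>2)"
      unfolding x using pos by (intro sum.cong) auto
  qed
qed

lemma sum_squares_in_feasible_sums:
  fixes s :: "nat \<Rightarrow> real"
  assumes "2 \<le> q" "0 < F" "0 < P" and s: "\<forall>i<q. 0 < s i" and "(\<Sum>i<q. s i)\<^sup>2 \<le> F * P"
    and desc: "\<forall>i. Suc i < q \<longrightarrow> s (Suc i) \<le> s i" and first: "s 0 \<le> sqrt m"
  shows "(\<Sum>i<q. (s i)\<^sup>2) \<in> feasible_sums q F P m"
proof -
  obtain f p where "\<forall>i<q. 0 < f i \<and> 0 < p i" and fp: "\<forall>i<q. f i * p i = (s i)\<^sup>2"
    and "(\<Sum>i<q. f i) = F" "(\<Sum>i<q. p i) = P"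
    using exists_factors_with_products assms by metis
  moreover have "\<forall>i. Suc i < q \<longrightarrow> f (Suc i) * p (Suc i) \<le> f i * p i"
  proof (intro allI impI)
    fix i assume i: "Suc i < q"
    then have "(s (Suc i))\<^sup>2 \<le> (s i)\<^sup>2" using s desc by (intro power_mono) auto
    then show "f (Suc i) * p (Suc i) \<le> f i * p i" using fp i by simp
  qed
  moreover have "f 0 * p 0 \<le> m"
  proof -
    have "0 < s 0" using s assms(1) by simp
    then have "(s 0)\<^sup>2 \<le> (sqrt m)\<^sup>2" using first by (intro power_mono) auto
    moreover have "0 < m" using first \<open>0 < s 0\<close> by (metis less_le_trans real_sqrt_gt_0_iff)
    ultimately show ?thesis using fp assms(1) by simp
  qed
  moreover have "(\<Sum>i<q. (s i)\<^sup>2) = (\<Sum>i<q. f i * p i)" using fp by simp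
  ultimately show ?thesis unfolding feasible_sums_def by blast
qed

lemma feasible_sums_le:
  assumes "x \<in> feasible_sums q F P m" and t: "0 \<le> t" "t \<le> sqrt m"
    and split: "sqrt (F * P) = real u * sqrt m + t"
  shows "x \<le> real u * m + t\<^sup>2"
proof -
  obtain s where "\<forall>i<q. 0 \<le> s i \<and> s i \<le> sqrt m" "(\<Sum>i<q. s i) \<le> sqrt (F * P)"
    and x: "x = (\<Sum>i<q. (s i)\<^sup>2)"
    using assms(1) by (rule feasible_sums_as_sum_squares)
  then have "x \<le> real u * (sqrt m)\<^sup>2 + t\<^sup>2"
    using t split by (auto intro: sum_squares_le_of_bounded_sum)
  moreover have "0 \<le> m" using t by (metis order_trans real_sqrt_ge_0_iff)
  ultimately show ?thesis by simp
qed

lemma feasible_sums_le_mult: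
  assumes "x \<in> feasible_sums q F P m"
  shows "x \<le> m * real q"
proof -
  obtain s where s: "\<forall>i<q. 0 \<le> s i \<and> s i \<le> sqrt m" and x: "x = (\<Sum>i<q. (s i)\<^sup>2)"
    using assms by (rule feasible_sums_as_sum_squares)
  have "(s i)\<^sup>2 \<le> m" if "i < q" for i
    using s that real_sqrt_le_iff sqrt_le_D by fastforce
  then have "x \<le> (\<Sum>i<q. m)" unfolding x by (intro sum_mono) auto
  then show ?thesis by (simp add: mult.commute)
qed

text \<open>The supremum is approached, as \<open>d \<rightarrow> 0\<^sup>+\<close>, by the profiles
  \<open>(\<surd>m, \<dots>, \<surd>m, t - k d, d, \<dots>, d)\<close> with \<open>u\<close> entries \<open>\<surd>m\<close> and \<open>k\<close> entries \<open>d\<close>;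
  the limit profile itself is not admissible, as its tail would vanish.\<close>
lemma Sup_feasible_sums_eq:
  assumes q: "2 \<le> q" and F: "0 < F" and P: "0 < P" and u: "u < q"
    and t: "0 < t" "t \<le> sqrt m" and split: "sqrt (F * P) = real u * sqrt m + t"
  shows "Sup (feasible_sums q F P m) = real u * m + t\<^sup>2"
proof -
  define k where "k = real (q - Suc u)"
  define s where "s d i = (if i < u then sqrt m else if i = u then t - k * d else d)" for d i
  have m: "0 < m" using t by (metis less_le_trans real_sqrt_gt_0_iff)
  have blocks: "(\<Sum>i<q. h i) = (\<Sum>i<u. h i) + h u + (\<Sum>i=Suc u..<q. h i)" for h :: "nat \<Rightarrow> real"
    using u by (simp add: lessThan_atLeast0 sum.atLeastLessThan_concat[of 0 "Suc u" q, symmetric])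
  have sum_s: "(\<Sum>i<q. s d i) = sqrt (F * P)" for d
    using u by (simp add: blocks s_def split k_def)
  have sum_sq: "(\<Sum>i<q. (s d i)\<^sup>2) = real u * m + (t - k * d)\<^sup>2 + k * d\<^sup>2" for d
    using u m by (simp add: blocks s_def k_def)
  have "eventually (\<lambda>d. 0 < d \<and> (k + 1) * d < t) (at_right 0)"
  proof -
    have "0 < t / (k + 1)" using t by (simp add: k_def)
    then have "eventually (\<lambda>d. 0 < d \<and> d < t / (k + 1)) (at_right 0)"
      using eventually_at_right_real by (simp add: eventually_conj_iff)
    then show ?thesis by eventually_elim (simp add: k_def mult.commute less_divide_eq)
  qed
  then have "eventually (\<lambda>d. (\<Sum>i<q. (s d i)\<^sup>2) \<in> feasible_sums q F P m) (at_right 0)"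
  proof eventually_elim
    case (elim d)
    have "0 \<le> k * d" using elim by (simp add: k_def)
    then have "t - k * d \<le> sqrt m" using t by linarith
    moreover have "d \<le> t - k * d" using elim by (simp add: algebra_simps)
    moreover have "(\<Sum>i<q. s d i)\<^sup>2 \<le> F * P" using F P by (simp add: sum_s)
    ultimately show ?case
      using q F P m elim by (intro sum_squares_in_feasible_sums) (auto simp: s_def)
  qed
  moreover have "((\<lambda>d. real u * m + (t - k * d)\<^sup>2 + k * d\<^sup>2) \<longlongrightarrow> real u * m + t\<^sup>2) (at_right 0)"
    by (rule tendsto_eq_intros refl | simp)+
  ultimately show ?thesis
    using t split by (intro cSup_eq_of_tendsto[where g = "\<lambda>d. \<Sum>i<q. (s d i)\<^sup>2"])
      (auto simp: sum_sq intro: feasible_sums_le)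
qed

theorem lemmaA2:
  fixes q :: nat and F P m :: real
  assumes "q \<ge> 2" and "F > 0" and "P > 0" and "m > 0"
  shows "(F * P \<le> m \<longrightarrow> Sup (feasible_sums q F P m) = F * P)
     \<and> (\<forall>u\<in>{1..q-1}. F * P / (real u + 1)^2 \<le> m \<and> m < F * P / (real u)^2 \<longrightarrow>
           Sup (feasible_sums q F P m) = real u * m + (sqrt (F * P) - real u * sqrt m)^2)
     \<and> (m < F * P / (real q)^2 \<longrightarrow> Sup (feasible_sums q F P m) = m * real q)"
proof (intro conjI impI ballI)
  assume "F * P \<le> m"
  then have "Sup (feasible_sums q F P m) = real 0 * m + (sqrt (F * P))\<^sup>2"
    using assms by (intro Sup_feasible_sums_eq) auto
  then show "Sup (feasible_sums q F P m) = F * P" using assms by simp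
next
  fix u assume u: "u \<in> {1..q-1}" and "F * P / (real u + 1)^2 \<le> m \<and> m < F * P / (real u)^2"
  then have "sqrt ((real u)\<^sup>2 * m) < sqrt (F * P)" "sqrt (F * P) \<le> sqrt ((real u + 1)\<^sup>2 * m)"
    by (auto simp: field_simps)
  then show "Sup (feasible_sums q F P m) = real u * m + (sqrt (F * P) - real u * sqrt m)\<^sup>2"
    using assms u by (intro Sup_feasible_sums_eq) (auto simp: real_sqrt_mult algebra_simps)
next
  assume "m < F * P / (real q)^2"
  then have "(\<Sum>i<q. sqrt m)\<^sup>2 \<le> F * P"
    using assms by (simp add: field_simps)
  then have "(\<Sum>i<q. (sqrt m)\<^sup>2) \<in> feasible_sums q F P m"
    using assms by (intro sum_squares_in_feasible_sums) auto
  then show "Sup (feasible_sums q F P m) = m * real q"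
    using assms by (intro cSup_eq_maximum) (auto simp: mult.commute feasible_sums_le_mult)
qed

end
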